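(* Let $G$ be a finite group. Then the commuting graph $\Gamma_C(G)$ is minimally connected if and only if $G$ is abelian.
   Context: The commuting graph $\Gamma_C(G)$ of a group $G$ is the simple undirected graph with vertex set $G$ in which two distinct elements $x,y$ are adjacent if and only if $xy=yx$. For a connected graph $\Gamma$, a vertex cut-set is a set $S$ of vertices such that $\Gamma-S$ is disconnected or has just one vertex, and the vertex connectivity $\kappa(\Gamma)$ is the smallest size of a vertex cut-set. $\Gamma$ is minimally connected if $\kappa(\Gamma-\epsilon)=\kappa(\Gamma)-1$ for every edge $\epsilon$ of $\Gamma$. *)

theory Defs
  imports "HOL-Algebra.Group"
begin

text \<open>A finite simple graph is represented as a pair (V, E) of a vertex set and a set
of edges, each edge being a two-element subset of V.\<close>

type_synonym 'a sgraph = "'a set \<times> 'a set set"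

definition commuting_graph :: "('a, 'b) monoid_scheme \<Rightarrow> 'a sgraph" where
  "commuting_graph G = (carrier G,
     {{x, y} | x y. x \<in> carrier G \<and> y \<in> carrier G \<and> x \<noteq> y \<and>
                    x \<otimes>\<^bsub>G\<^esub> y = y \<otimes>\<^bsub>G\<^esub> x})"

definition gadj :: "'a set set \<Rightarrow> 'a set \<Rightarrow> 'a \<Rightarrow> 'a \<Rightarrow> bool" where
  "gadj E W x y \<longleftrightarrow> x \<in> W \<and> y \<in> W \<and> {x, y} \<in> E"

definition graph_connected :: "'a sgraph \<Rightarrow> bool" where
  "graph_connected \<Gamma> \<longleftrightarrow>
     (\<forall>x\<in>fst \<Gamma>. \<forall>y\<in>fst \<Gamma>. (gadj (snd \<Gamma>) (fst \<Gamma>))\<^sup>*\<^sup>* x y)"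

definition vertex_cut_set :: "'a sgraph \<Rightarrow> 'a set \<Rightarrow> bool" where
  "vertex_cut_set \<Gamma> S \<longleftrightarrow> S \<subseteq> fst \<Gamma> \<and>
     (\<not> graph_connected (fst \<Gamma> - S, snd \<Gamma>) \<or> card (fst \<Gamma> - S) = 1)"

definition vertex_connectivity :: "'a sgraph \<Rightarrow> nat" where
  "vertex_connectivity \<Gamma> = (LEAST k. \<exists>S. vertex_cut_set \<Gamma> S \<and> card S = k)"

definition delete_edge :: "'a sgraph \<Rightarrow> 'a set \<Rightarrow> 'a sgraph" where
  "delete_edge \<Gamma> e = (fst \<Gamma>, snd \<Gamma> - {e})"

definition minimally_connected :: "'a sgraph \<Rightarrow> bool" where
  "minimally_connected \<Gamma> \<longleftrightarrow> graph_connected \<Gamma> \<and>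
     (\<forall>e\<in>snd \<Gamma>. vertex_connectivity (delete_edge \<Gamma> e) = vertex_connectivity \<Gamma> - 1)"

end

theory Submission
  imports Defs
begin

text \<open>If G is abelian, the commuting graph is complete, so its connectivity is |G| - 1 and drops to
|G| - 2 after deleting any edge. If G is not abelian, two non-commuting elements already bound the
connectivity by |G| - 2. Some x differs from its inverse (a group of exponent two is abelian), and
x, x\<inverse> have the same centraliser, i.e. they are adjacent twins. Deleting the edge {x, x\<inverse>} cannot
disconnect what remains after removing fewer than |G| - 2 vertices: any surviving common neighbour
bypasses the edge, and without one the surviving vertices would be exactly x and x\<inverse>. So the
connectivity, which is positive, does not drop.\<close>

lemma graph_connectedI_common_neighbour:
  assumes "\<And>u v. u \<in> W \<Longrightarrow> v \<in> W \<Longrightarrow> u \<noteq> v \<Longrightarrow>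
     gadj E W u v \<or> (\<exists>w. gadj E W u w \<and> gadj E W w v)"
  shows "graph_connected (W, E)"
  unfolding graph_connected_def fst_conv snd_conv
proof (intro ballI)
  fix u v assume uv: "u \<in> W" "v \<in> W"
  show "(gadj E W)\<^sup>*\<^sup>* u v"
  proof (cases "u = v")
    case False
    then show ?thesis using assms[OF uv False]
      by (meson converse_rtranclp_into_rtranclp r_into_rtranclp)
  qed simp
qed

lemma not_vertex_cut_setI:
  assumes "graph_connected (V - S, E)" "card (V - S) \<noteq> 1"
  shows "\<not> vertex_cut_set (V, E) S"
  using assms unfolding vertex_cut_set_def by simp

lemma vertex_connectivity_le: "vertex_cut_set \<Gamma> S \<Longrightarrow> vertex_connectivity \<Gamma> \<le> card S"
  unfolding vertex_connectivity_def by (rule Least_le) blast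

lemma vertex_connectivity_attained:
  "vertex_cut_set \<Gamma> S \<Longrightarrow> \<exists>T. vertex_cut_set \<Gamma> T \<and> card T = vertex_connectivity \<Gamma>"
  unfolding vertex_connectivity_def by (rule LeastI[of _ "card S"]) blast

lemma le_vertex_connectivityI:
  assumes "vertex_cut_set \<Gamma> S" "\<And>T. vertex_cut_set \<Gamma> T \<Longrightarrow> k \<le> card T"
  shows "k \<le> vertex_connectivity \<Gamma>"
  using vertex_connectivity_attained assms by metis

lemma vertex_connectivity_pos:
  assumes "graph_connected (V, E)" "finite V" "card V \<noteq> 1" "vertex_cut_set (V, E) S"
  shows "0 < vertex_connectivity (V, E)"
proof -
  obtain T where T: "vertex_cut_set (V, E) T" "card T = vertex_connectivity (V, E)"
    using vertex_connectivity_attained[OF assms(4)] by blast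
  have "T \<noteq> {}"
    using T(1) assms(1,3) not_vertex_cut_setI[of V "{}" E] by auto
  moreover have "finite T"
    using T(1) assms(2) finite_subset unfolding vertex_cut_set_def by auto
  ultimately show ?thesis using T(2) by auto
qed

lemma vertex_cut_set_nonadjacent:
  assumes "a \<in> V" "b \<in> V" "a \<noteq> b" "{a, b} \<notin> E"
  shows "vertex_cut_set (V, E) (V - {a, b})"
proof -
  have "(gadj E {a, b})\<^sup>*\<^sup>* a v \<Longrightarrow> v = a" for v
    by (induction rule: rtranclp_induct) (use assms(4) in \<open>auto simp: gadj_def\<close>)
  then have "\<not> graph_connected ({a, b}, E)"
    unfolding graph_connected_def using assms(3) by auto
  moreover have "V - (V - {a, b}) = {a, b}" using assms by auto
  ultimately show ?thesis unfolding vertex_cut_set_def by auto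
qed

lemma vertex_connectivity_le_nonadjacent:
  assumes "finite V" "a \<in> V" "b \<in> V" "a \<noteq> b" "{a, b} \<notin> E"
  shows "vertex_connectivity (V, E) \<le> card V - 2"
  using vertex_connectivity_le[OF vertex_cut_set_nonadjacent[OF assms(2-5)]] assms
  by (simp add: card_Diff_subset)

lemma vertex_connectivity_complete:
  assumes fin: "finite V" and "a \<in> V"
    and complete: "\<And>u v. u \<in> V \<Longrightarrow> v \<in> V \<Longrightarrow> u \<noteq> v \<Longrightarrow> {u, v} \<in> E"
  shows "vertex_connectivity (V, E) = card V - 1"
proof (rule antisym)
  have cut: "vertex_cut_set (V, E) (V - {a})"
    unfolding vertex_cut_set_def using \<open>a \<in> V\<close> by (auto simp: Diff_Diff_Int Int_absorb1)
  then show "vertex_connectivity (V, E) \<le> card V - 1"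
    using vertex_connectivity_le \<open>a \<in> V\<close> fin by (fastforce simp: card_Diff_singleton)
  show "card V - 1 \<le> vertex_connectivity (V, E)"
  proof (rule le_vertex_connectivityI[OF cut], rule ccontr)
    fix T assume T: "vertex_cut_set (V, E) T" "\<not> card V - 1 \<le> card T"
    then have "T \<subseteq> V" unfolding vertex_cut_set_def by simp
    with T(2) fin have "2 \<le> card (V - T)" by (simp add: card_Diff_subset finite_subset)
    moreover have "graph_connected (V - T, E)"
      by (rule graph_connectedI_common_neighbour) (auto simp: gadj_def complete)
    ultimately show False using T(1) not_vertex_cut_setI by fastforce
  qed
qed

lemma vertex_connectivity_complete_minus_edge:
  assumes fin: "finite V" and ab: "a \<in> V" "b \<in> V" "a \<noteq> b"
    and complete: "\<And>u v. u \<in> V \<Longrightarrow> v \<in> V \<Longrightarrow> u \<noteq> v \<Longrightarrow> {u, v} \<in> E"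
  shows "vertex_connectivity (V, E - {{a, b}}) = card V - 2"
proof (rule antisym)
  show "vertex_connectivity (V, E - {{a, b}}) \<le> card V - 2"
    by (rule vertex_connectivity_le_nonadjacent) (use fin ab in auto)
  have cut: "vertex_cut_set (V, E - {{a, b}}) (V - {a, b})"
    by (rule vertex_cut_set_nonadjacent) (use ab in auto)
  show "card V - 2 \<le> vertex_connectivity (V, E - {{a, b}})"
  proof (rule le_vertex_connectivityI[OF cut], rule ccontr)
    fix T assume T: "vertex_cut_set (V, E - {{a, b}}) T" "\<not> card V - 2 \<le> card T"
    then have "T \<subseteq> V" unfolding vertex_cut_set_def by simp
    with T(2) fin have three: "3 \<le> card (V - T)" by (simp add: card_Diff_subset finite_subset)
    have "\<not> V - T \<subseteq> {a, b}"
      using card_mono[of "{a, b}" "V - T"] three by (auto simp: card_insert_if split: if_splits)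
    then obtain w where w: "w \<in> V - T" "w \<notin> {a, b}" by blast
    have "graph_connected (V - T, E - {{a, b}})"
    proof (rule graph_connectedI_common_neighbour)
      fix u v assume uv: "u \<in> V - T" "v \<in> V - T" "u \<noteq> v"
      show "gadj (E - {{a, b}}) (V - T) u v \<or>
          (\<exists>w. gadj (E - {{a, b}}) (V - T) u w \<and> gadj (E - {{a, b}}) (V - T) w v)"
      proof (cases "{u, v} = {a, b}")
        case True
        then have "gadj (E - {{a, b}}) (V - T) u w \<and> gadj (E - {{a, b}}) (V - T) w v"
          using uv w complete ab by (auto simp: gadj_def doubleton_eq_iff)
        then show ?thesis by blast
      qed (use uv complete in \<open>auto simp: gadj_def\<close>)
    qed
    with T(1) three show False using not_vertex_cut_setI by fastforce
  qed
qed

lemma graph_connected_twins_common_neighbour: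
  assumes conn: "graph_connected (W, E)" and ab: "a \<in> W" "b \<in> W" "W \<noteq> {a, b}"
    and twins: "\<And>w. w \<in> W \<Longrightarrow> w \<notin> {a, b} \<Longrightarrow> {w, a} \<in> E \<longleftrightarrow> {w, b} \<in> E"
  shows "\<exists>w\<in>W. w \<notin> {a, b} \<and> {w, a} \<in> E \<and> {w, b} \<in> E"
proof (rule ccontr)
  assume no_neighbour: "\<not> ?thesis"
  have "(gadj E W)\<^sup>*\<^sup>* a z \<Longrightarrow> z \<in> {a, b}" for z
  proof (induction rule: rtranclp_induct)
    case (step y z)
    show ?case
    proof (rule ccontr)
      assume "z \<notin> {a, b}"
      moreover have "z \<in> W" "{z, y} \<in> E"
        using step.hyps(2) by (auto simp: gadj_def insert_commute)
      ultimately have "{z, a} \<in> E" "{z, b} \<in> E" using step.IH twins[of z] by auto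
      with \<open>z \<in> W\<close> \<open>z \<notin> {a, b}\<close> no_neighbour show False by blast
    qed
  qed simp
  then have "W \<subseteq> {a, b}"
    using conn ab(1) unfolding graph_connected_def by auto
  with ab show False by blast
qed

lemma graph_connected_delete_twin_edge:
  assumes conn: "graph_connected (W, E)" and "W \<noteq> {a, b}"
    and twins: "\<And>w. w \<in> W \<Longrightarrow> w \<notin> {a, b} \<Longrightarrow> {w, a} \<in> E \<longleftrightarrow> {w, b} \<in> E"
  shows "graph_connected (W, E - {{a, b}})"
proof -
  have bypass: "(gadj (E - {{a, b}}) W)\<^sup>*\<^sup>* u v" if uv: "gadj E W u v" for u v
  proof (cases "{u, v} = {a, b}")
    case True
    then have abW: "a \<in> W" "b \<in> W" using uv by (auto simp: gadj_def doubleton_eq_iff)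
    then obtain w where w: "w \<in> W" "w \<notin> {a, b}" "{w, a} \<in> E" "{w, b} \<in> E"
      using graph_connected_twins_common_neighbour[OF conn _ _ \<open>W \<noteq> {a, b}\<close> twins] by blast
    have "gadj (E - {{a, b}}) W u w" "gadj (E - {{a, b}}) W w v"
      using True abW w by (auto simp: gadj_def doubleton_eq_iff insert_commute)
    then show ?thesis by (meson converse_rtranclp_into_rtranclp r_into_rtranclp)
  next
    case False
    with uv have "gadj (E - {{a, b}}) W u v" by (simp add: gadj_def)
    then show ?thesis by blast
  qed
  have "(gadj E W)\<^sup>*\<^sup>* u v \<Longrightarrow> (gadj (E - {{a, b}}) W)\<^sup>*\<^sup>* u v" for u v
    by (induction rule: rtranclp_induct) (simp, metis bypass rtranclp_trans)
  with conn show ?thesis unfolding graph_connected_def by simp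
qed

lemma vertex_connectivity_delete_twin_edge:
  assumes fin: "finite V" and ab: "a \<in> V" "b \<in> V" "a \<noteq> b"
    and twins: "\<And>w. w \<in> V \<Longrightarrow> w \<notin> {a, b} \<Longrightarrow> {w, a} \<in> E \<longleftrightarrow> {w, b} \<in> E"
    and pq: "p \<in> V" "q \<in> V" "p \<noteq> q" "{p, q} \<notin> E"
  shows "vertex_connectivity (V, E) \<le> vertex_connectivity (V, E - {{a, b}})"
proof (rule le_vertex_connectivityI, rule vertex_cut_set_nonadjacent[OF pq(1-3)])
  show "{p, q} \<notin> E - {{a, b}}" using pq(4) by simp
  fix T assume T: "vertex_cut_set (V, E - {{a, b}}) T"
  show "vertex_connectivity (V, E) \<le> card T"
  proof (rule ccontr)
    assume small: "\<not> ?thesis"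
    then have "\<not> vertex_cut_set (V, E) T" using vertex_connectivity_le by fastforce
    then have conn: "graph_connected (V - T, E)" and "card (V - T) \<noteq> 1"
      using T unfolding vertex_cut_set_def by auto
    then have disconn: "\<not> graph_connected (V - T, E - {{a, b}})"
      using T unfolding vertex_cut_set_def by auto
    have "V - T = {a, b}"
    proof (rule ccontr)
      assume "V - T \<noteq> {a, b}"
      from graph_connected_delete_twin_edge[OF conn this] twins disconn show False by simp
    qed
    then have "T = V - {a, b}" using T ab unfolding vertex_cut_set_def by auto
    then have "card T = card V - 2" using fin ab by (simp add: card_Diff_subset)
    then show False
      using small vertex_connectivity_le_nonadjacent[OF fin pq] by simp
  qed
qed

lemma commuting_graph_edge_iff:
  "{x, y} \<in> snd (commuting_graph G) \<longleftrightarrow>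
   x \<in> carrier G \<and> y \<in> carrier G \<and> x \<noteq> y \<and> x \<otimes>\<^bsub>G\<^esub> y = y \<otimes>\<^bsub>G\<^esub> x"
  unfolding commuting_graph_def snd_conv by (auto simp: doubleton_eq_iff)

lemma commuting_graph_eq: "commuting_graph G = (carrier G, snd (commuting_graph G))"
  by (simp add: commuting_graph_def)

lemma (in group) commuting_graph_connected: "graph_connected (commuting_graph G)"
  by (subst commuting_graph_eq, rule graph_connectedI_common_neighbour)
    (auto simp: gadj_def commuting_graph_edge_iff)

lemma (in group) comm_group_if_inv_eq_self:
  assumes "\<And>x. x \<in> carrier G \<Longrightarrow> inv x = x"
  shows "comm_group G"
proof (rule group_comm_groupI)
  fix x y assume xy: "x \<in> carrier G" "y \<in> carrier G"
  have "x \<otimes> y = inv (x \<otimes> y)" using xy assms by simp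
  also have "\<dots> = inv y \<otimes> inv x" using xy by (simp add: inv_mult_group)
  finally show "x \<otimes> y = y \<otimes> x" using xy assms by simp
qed

lemma (in group) commutes_inv:
  assumes "x \<in> carrier G" "w \<in> carrier G" "w \<otimes> x = x \<otimes> w"
  shows "w \<otimes> inv x = inv x \<otimes> w"
proof -
  have "w \<otimes> inv x = inv x \<otimes> (x \<otimes> w) \<otimes> inv x" using assms(1,2) by (simp add: m_assoc[symmetric])
  also have "\<dots> = inv x \<otimes> (w \<otimes> x) \<otimes> inv x" using assms(3) by simp
  also have "\<dots> = inv x \<otimes> w" using assms(1,2) by (simp add: m_assoc)
  finally show ?thesis .
qed

lemma (in comm_group) minimally_connected_commuting_graph:
  assumes fin: "finite (carrier G)"
  shows "minimally_connected (commuting_graph G)"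
proof -
  define E where "E = snd (commuting_graph G)"
  have CG: "commuting_graph G = (carrier G, E)" unfolding E_def commuting_graph_def by simp
  have complete: "{u, v} \<in> E" if "u \<in> carrier G" "v \<in> carrier G" "u \<noteq> v" for u v
    using that unfolding E_def by (simp add: commuting_graph_edge_iff m_comm)
  have "vertex_connectivity (carrier G, E - {e}) = vertex_connectivity (carrier G, E) - 1"
    if "e \<in> E" for e
  proof -
    obtain a b where ab: "e = {a, b}" "a \<in> carrier G" "b \<in> carrier G" "a \<noteq> b"
      using \<open>e \<in> E\<close> unfolding E_def commuting_graph_def by auto
    show ?thesis
      using vertex_connectivity_complete[OF fin ab(2) complete]
        vertex_connectivity_complete_minus_edge[OF fin ab(2-4) complete]
      by (simp add: ab(1))
  qed
  then show ?thesis
    using commuting_graph_connected unfolding minimally_connected_def CG delete_edge_def by simp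
qed

lemma (in group) not_minimally_connected_commuting_graph:
  assumes fin: "finite (carrier G)" and "\<not> comm_group G"
  shows "\<not> minimally_connected (commuting_graph G)"
proof -
  define E where "E = snd (commuting_graph G)"
  have CG: "commuting_graph G = (carrier G, E)" unfolding E_def commuting_graph_def by simp
  have E_iff: "{u, v} \<in> E \<longleftrightarrow> u \<in> carrier G \<and> v \<in> carrier G \<and> u \<noteq> v \<and> u \<otimes> v = v \<otimes> u" for u v
    unfolding E_def by (rule commuting_graph_edge_iff)
  obtain p q where pq: "p \<in> carrier G" "q \<in> carrier G" "p \<otimes> q \<noteq> q \<otimes> p"
    using assms(2) group_comm_groupI by blast
  then have pq_nonadj: "p \<noteq> q" "{p, q} \<notin> E" by (auto simp: E_iff)
  obtain x where x: "x \<in> carrier G" "inv x \<noteq> x"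
    using assms(2) comm_group_if_inv_eq_self by blast
  have twins: "{w, x} \<in> E \<longleftrightarrow> {w, inv x} \<in> E" if "w \<in> carrier G" "w \<notin> {x, inv x}" for w
    using that x commutes_inv[of x w] commutes_inv[of "inv x" w] by (auto simp: E_iff)
  have "vertex_connectivity (carrier G, E) \<le> vertex_connectivity (carrier G, E - {{x, inv x}})"
    by (rule vertex_connectivity_delete_twin_edge[OF fin _ _ _ twins pq(1,2) pq_nonadj])
      (use x in auto)
  moreover have "card (carrier G) \<noteq> 1"
    using pq pq_nonadj(1) card_le_Suc0_iff_eq[OF fin] by auto
  then have "0 < vertex_connectivity (carrier G, E)"
    using vertex_connectivity_pos[OF _ fin _ vertex_cut_set_nonadjacent[OF pq(1,2) pq_nonadj]]
      commuting_graph_connected by (simp add: CG)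
  moreover have "{x, inv x} \<in> E" using x by (simp add: E_iff)
  ultimately show ?thesis unfolding minimally_connected_def CG delete_edge_def by fastforce
qed

theorem mainTheorem8:
  fixes G (structure)
  assumes "group G" and "finite (carrier G)"
  shows "minimally_connected (commuting_graph G) \<longleftrightarrow> comm_group G"
  using comm_group.minimally_connected_commuting_graph[OF _ assms(2)]
    group.not_minimally_connected_commuting_graph[OF assms]
  by blast

end
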